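(* Let $a\ge b\ge2$ and $k$ be integers with $2a+3\le k\le2a+2b-1$. Then for every $(i,j)\in\overline{Q}_1$: - $w_1,w_3,w_5\in\mathcal{R}^k_{(a,b),(i,j)}$; - if $b\ge\lceil(a+3)/2\rceil$ and $k=a+2b$, then $w_4\in\mathcal{R}^k_{(a,b),(i,j)}$; - if $b\ge\lceil a/2\rceil+2$ and $2a+3\le k\le a+2b-1$, then $w_6\in\mathcal{R}^k_{(a,b),(i,j)}$.
   Context: $\widehat{\mathfrak{su}}(3)_k$ fusion. Let $P_+^k=\{(\lambda_1,\lambda_2)\in\mathbb{Z}_{\ge0}^2:\lambda_1+\lambda_2\le k\}$. For $\lambda,\mu,\nu\in P_+^k$ set - $\mathcal{A}=\tfrac13[2(\lambda_1+\mu_1+\nu_2)+\lambda_2+\mu_2+\nu_1]$, - $\mathcal{B}=\tfrac13[\lambda_1+\mu_1+\nu_2+2(\lambda_2+\mu_2+\nu_1)]$, - $k_0^{\max}=\min(\mathcal{A},\mathcal{B})$, - $k_0^{\min}=\max(\lambda_1+\lambda_2,\mu_1+\mu_2,\nu_1+\nu_2,\mathcal{A}-\lambda_1,\mathcal{A}-\mu_1,\mathcal{A}-\nu_2,\mathcal{B}-\lambda_2,\mathcal{B}-\mu_2,\mathcal{B}-\nu_1)$. The fusion multiplicity is $N^{(k)\nu}_{\lambda,\mu}=\min(k_0^{\max},k)-k_0^{\min}+1$ if $\mathcal{A},\mathcal{B}$ are nonnegative integers, $k_0^{\max}\ge k_0^{\min}$ and $k\ge k_0^{\min}$; otherwise it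 is $0$. The set $\mathcal{R}^k_{\lambda,\mu}$ is $\{\nu\in P_+^k:N^{(k)\nu}_{\lambda,\mu}\ne0\}$. The candidate weights are $w_1=(a-1,b+2)$, $w_2=(a+2,b-1)$, $w_3=(a+1,b-2)$, $w_4=(a-2,b+1)$, $w_5=(a+1,b+1)$, $w_6=(a-1,b-1)$. The set $\overline{Q}_1$ is defined by $\overline{Q}_1=\{(3p-k,2k-3p):p\in\mathbb{Z},\ \lceil(k+1)/2\rceil\le p\le\min(a+b,k-a-1,\lfloor2k/3\rfloor,\lfloor(b+k)/2\rfloor)\}$. *)

theory Defs
  imports Complex_Main
begin

type_synonym wt = "int \<times> int"

definition dom_wts :: "int \<Rightarrow> wt set" where
  "dom_wts k = {(l1, l2). 0 \<le> l1 \<and> 0 \<le> l2 \<and> l1 + l2 \<le> k}"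

definition calA :: "wt \<Rightarrow> wt \<Rightarrow> wt \<Rightarrow> rat" where
  "calA l m n = (2 * of_int (fst l + fst m + snd n) + of_int (snd l + snd m + fst n)) / 3"

definition calB :: "wt \<Rightarrow> wt \<Rightarrow> wt \<Rightarrow> rat" where
  "calB l m n = (of_int (fst l + fst m + snd n) + 2 * of_int (snd l + snd m + fst n)) / 3"

definition k0max :: "wt \<Rightarrow> wt \<Rightarrow> wt \<Rightarrow> rat" where
  "k0max l m n = min (calA l m n) (calB l m n)"

definition k0min :: "wt \<Rightarrow> wt \<Rightarrow> wt \<Rightarrow> rat" where
  "k0min l m n = Max {of_int (fst l + snd l), of_int (fst m + snd m), of_int (fst n + snd n),
     calA l m n - of_int (fst l), calA l m n - of_int (fst m), calA l m n - of_int (snd n),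
     calB l m n - of_int (snd l), calB l m n - of_int (snd m), calB l m n - of_int (fst n)}"

definition fusion_mult :: "int \<Rightarrow> wt \<Rightarrow> wt \<Rightarrow> wt \<Rightarrow> rat" where
  "fusion_mult k l m n =
    (if calA l m n \<in> \<int> \<and> calA l m n \<ge> 0 \<and> calB l m n \<in> \<int> \<and> calB l m n \<ge> 0
        \<and> k0max l m n \<ge> k0min l m n \<and> of_int k \<ge> k0min l m n
     then min (k0max l m n) (of_int k) - k0min l m n + 1 else 0)"

definition fusion_R :: "int \<Rightarrow> wt \<Rightarrow> wt \<Rightarrow> wt set" where
  "fusion_R k l m = {n \<in> dom_wts k. fusion_mult k l m n \<noteq> 0}"

definition Q1bar :: "int \<Rightarrow> int \<Rightarrow> int \<Rightarrow> wt set" where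
  "Q1bar a b k = {(3 * p - k, 2 * k - 3 * p) | p :: int.
     \<lceil>(real_of_int k + 1) / 2\<rceil> \<le> p \<and>
     p \<le> min (a + b) (min (k - a - 1) (min \<lfloor>2 * real_of_int k / 3\<rfloor> \<lfloor>(real_of_int b + real_of_int k) / 2\<rfloor>))}"

definition w1 :: "int \<Rightarrow> int \<Rightarrow> wt" where "w1 a b = (a - 1, b + 2)"
definition w2 :: "int \<Rightarrow> int \<Rightarrow> wt" where "w2 a b = (a + 2, b - 1)"
definition w3 :: "int \<Rightarrow> int \<Rightarrow> wt" where "w3 a b = (a + 1, b - 2)"
definition w4 :: "int \<Rightarrow> int \<Rightarrow> wt" where "w4 a b = (a - 2, b + 1)"
definition w5 :: "int \<Rightarrow> int \<Rightarrow> wt" where "w5 a b = (a + 1, b + 1)"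
definition w6 :: "int \<Rightarrow> int \<Rightarrow> wt" where "w6 a b = (a - 1, b - 1)"

end

theory Submission
  imports Defs
begin

text \<open>A weight of \<open>Q1bar\<close> has the form \<open>\<mu> = (3p - k, 2k - 3p)\<close>, and writing a weight near
  \<open>(a, b)\<close> as \<open>\<nu> = (a + 2t - s, b + 2s - t)\<close> makes \<open>\<A> = a + b + p + s\<close> and
  \<open>\<B> = a + b + k - p + t\<close> integers. Then \<open>N \<noteq> 0\<close> reduces to the nine lower bounds in
  \<open>k0min\<close> being at most \<open>min \<A> \<B> k\<close>. The candidate weights are such \<open>\<nu>\<close> with
  \<open>|s|, |t|, |s - t| \<le> 1\<close>, and for them these bounds follow linearly from \<open>b \<le> a\<close>,
  \<open>k + 1 \<le> 2p\<close>, \<open>p \<le> k - a - 1\<close> and \<open>p \<le> a + b + t\<close>; for \<open>w4, w6\<close> (\<open>t = -1\<close>)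
  the last one comes from \<open>k \<le> a + 2b\<close>.\<close>

lemma mem_fusion_R_if_integral:
  fixes A B k :: int
  assumes n: "n \<in> dom_wts k"
    and A: "calA l m n = of_int A" and B: "calB l m n = of_int B"
    and bounds: "\<forall>u \<in> {fst l + snd l, fst m + snd m, fst n + snd n,
       A - fst l, A - fst m, A - snd n, B - snd l, B - snd m, B - fst n}. u \<le> min A (min B k)"
  shows "n \<in> fusion_R k l m"
proof -
  define S where "S = {fst l + snd l, fst m + snd m, fst n + snd n,
       A - fst l, A - fst m, A - snd n, B - snd l, B - snd m, B - fst n}"
  define c where "c = min A (min B k)"
  have S_le: "\<forall>u \<in> S. u \<le> c"
    using bounds unfolding S_def c_def .
  have "k0min l m n = Max (of_int ` S)"
    unfolding k0min_def S_def A B by (simp only: image_insert image_empty of_int_diff)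
  also have "\<dots> \<le> of_int c"
    using S_le by (subst Max_le_iff) (auto simp: S_def)
  finally have min_le: "k0min l m n \<le> of_int c" .
  have "0 \<le> fst n + snd n" "fst n + snd n \<in> S"
    using n by (auto simp: dom_wts_def S_def)
  then have "0 \<le> c"
    using S_le by auto
  moreover have "k0max l m n = of_int (min A B)"
    unfolding k0max_def A B by simp
  moreover have "c \<le> min A B" "c \<le> k"
    unfolding c_def by auto
  ultimately have "fusion_mult k l m n = min (k0max l m n) (of_int k) - k0min l m n + 1"
    and "of_int c \<le> min (k0max l m n) (of_int k)"
    using min_le unfolding fusion_mult_def A B by auto
  then have "fusion_mult k l m n \<noteq> 0"
    using min_le by linarith
  then show ?thesis
    using n by (simp add: fusion_R_def)
qed

lemma calA_shifted_weight:
  "calA (a, b) (3*p - k, 2*k - 3*p) (a + 2*t - s, b + 2*s - t) = of_int (a + b + p + s)"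
  unfolding calA_def by (simp add: field_simps)

lemma calB_shifted_weight:
  "calB (a, b) (3*p - k, 2*k - 3*p) (a + 2*t - s, b + 2*s - t) = of_int (a + b + k - p + t)"
  unfolding calB_def by (simp add: field_simps)

lemma shifted_weight_mem_fusion_R:
  fixes a b k p s t :: int
  assumes "b \<le> a" "k + 1 \<le> 2*p" "p \<le> k - a - 1" "p \<le> a + b + t"
    and "\<bar>s\<bar> \<le> 1" "\<bar>t\<bar> \<le> 1" "\<bar>s - t\<bar> \<le> 1"
  shows "(a + 2*t - s, b + 2*s - t) \<in> fusion_R k (a, b) (3*p - k, 2*k - 3*p)"
proof (rule mem_fusion_R_if_integral[OF _ calA_shifted_weight calB_shifted_weight])
  note bounds = assms(1-4) assms(5-7)[unfolded abs_le_iff]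
  show "(a + 2*t - s, b + 2*s - t) \<in> dom_wts k"
    unfolding dom_wts_def using bounds by simp
  show "\<forall>u \<in> {fst (a, b) + snd (a, b), fst (3*p - k, 2*k - 3*p) + snd (3*p - k, 2*k - 3*p),
      fst (a + 2*t - s, b + 2*s - t) + snd (a + 2*t - s, b + 2*s - t),
      a + b + p + s - fst (a, b), a + b + p + s - fst (3*p - k, 2*k - 3*p),
      a + b + p + s - snd (a + 2*t - s, b + 2*s - t),
      a + b + k - p + t - snd (a, b), a + b + k - p + t - snd (3*p - k, 2*k - 3*p),
      a + b + k - p + t - fst (a + 2*t - s, b + 2*s - t)}.
      u \<le> min (a + b + p + s) (min (a + b + k - p + t) k)"
    by (simp only: ball_simps min.bounded_iff simp_thms fst_conv snd_conv)
      (intro conjI; use bounds in linarith)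
qed

lemma Q1barE:
  assumes "(i, j) \<in> Q1bar a b k"
  obtains p where "i = 3*p - k" "j = 2*k - 3*p" "k + 1 \<le> 2*p" "p \<le> a + b" "p \<le> k - a - 1"
proof -
  from assms obtain p where "i = 3*p - k" "j = 2*k - 3*p"
    and "\<lceil>(real_of_int k + 1) / 2\<rceil> \<le> p" "p \<le> a + b" "p \<le> k - a - 1"
    unfolding Q1bar_def by auto
  then show thesis
    using that by (simp add: ceiling_le_iff)
qed

theorem mainTheorem8:
  fixes a b k :: int
  assumes "a \<ge> b" and "b \<ge> 2"
    and "2 * a + 3 \<le> k" and "k \<le> 2 * a + 2 * b - 1"
  shows "\<forall>(i, j) \<in> Q1bar a b k.
      w1 a b \<in> fusion_R k (a, b) (i, j) \<and>
      w3 a b \<in> fusion_R k (a, b) (i, j) \<and>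
      w5 a b \<in> fusion_R k (a, b) (i, j) \<and>
      (b \<ge> \<lceil>(real_of_int a + 3) / 2\<rceil> \<and> k = a + 2 * b \<longrightarrow> w4 a b \<in> fusion_R k (a, b) (i, j)) \<and>
      (b \<ge> \<lceil>real_of_int a / 2\<rceil> + 2 \<and> 2 * a + 3 \<le> k \<and> k \<le> a + 2 * b - 1
         \<longrightarrow> w6 a b \<in> fusion_R k (a, b) (i, j))"
proof (intro ballI, clarify)
  fix i j assume "(i, j) \<in> Q1bar a b k"
  then obtain p where ij: "i = 3*p - k" "j = 2*k - 3*p"
    and p: "k + 1 \<le> 2*p" "p \<le> a + b" "p \<le> k - a - 1"
    by (rule Q1barE)
  note shift = shifted_weight_mem_fusion_R[OF assms(1) p(1,3), folded ij]
  have "w1 a b \<in> fusion_R k (a, b) (i, j)" "w3 a b \<in> fusion_R k (a, b) (i, j)"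
    "w5 a b \<in> fusion_R k (a, b) (i, j)"
    using shift[where s=1 and t=0] shift[where s="-1" and t=0] shift[where s=1 and t=1] p(2)
    by (simp_all add: w1_def w3_def w5_def ac_simps)
  moreover have "w4 a b \<in> fusion_R k (a, b) (i, j)" and "w6 a b \<in> fusion_R k (a, b) (i, j)"
    if "k \<le> a + 2 * b"
    using shift[where s=0 and t="-1"] shift[where s="-1" and t="-1"] that assms(1) p(3)
    by (simp_all add: w4_def w6_def)
  ultimately show "w1 a b \<in> fusion_R k (a, b) (i, j) \<and>
      w3 a b \<in> fusion_R k (a, b) (i, j) \<and>
      w5 a b \<in> fusion_R k (a, b) (i, j) \<and>
      (b \<ge> \<lceil>(real_of_int a + 3) / 2\<rceil> \<and> k = a + 2 * b \<longrightarrow> w4 a b \<in> fusion_R k (a, b) (i, j)) \<and>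
      (b \<ge> \<lceil>real_of_int a / 2\<rceil> + 2 \<and> 2 * a + 3 \<le> k \<and> k \<le> a + 2 * b - 1
         \<longrightarrow> w6 a b \<in> fusion_R k (a, b) (i, j))"
    by auto
qed

end
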